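(* For any $\varepsilon>0$ and any $v,w\in\mathbb{R}^L$, if $\|v-w\|<\varepsilon$ then $\mathrm{argmax}^\varepsilon(v)\cap\mathrm{argmax}^\varepsilon(w)\neq\varnothing$. In particular, $\mathrm{argmax}^\varepsilon$ restricted to $\Delta_{L-1}$ is an $\varepsilon$-compatible selection rule.
   Context: $\|\cdot\|$ is the Euclidean norm on $\mathbb{R}^L$, $\Delta_{L-1}=\{w\in\mathbb{R}^L:w_i\ge0,\sum_iw_i=1\}$. For $\varepsilon>0$ and $j\in[L]$, $R_j^\varepsilon=\{w\in\mathbb{R}^L: w_j\ge\max_{\ell\neq j}w_\ell+\varepsilon/\sqrt2\}$, and the inflated argmax is $\mathrm{argmax}^\varepsilon(w)=\{j\in[L]:\mathrm{dist}(w,R_j^\varepsilon)<\varepsilon\}$ where $\mathrm{dist}(w,R)=\inf_{u\in R}\|w-u\|$. A selection rule $s:\Delta_{L-1}\to2^{[L]}$ is $\varepsilon$-compatible if $\|v-w\|<\varepsilon$ implies $s(v)\cap s(w)\ne\varnothing$ for all $v,w\in\Delta_{L-1}$. *)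

theory Defs
  imports "HOL-Analysis.Analysis"
begin

text \<open>Vectors in R^L are modelled as \<open>real ^ 'n\<close> with finite index type \<open>'n\<close> playing
  the role of [L]; \<open>dist\<close>/\<open>norm\<close> on this type is the Euclidean norm.\<close>

definition prob_simplex :: "(real ^ 'n) set" where
  "prob_simplex = {w. (\<forall>i. 0 \<le> w $ i) \<and> (\<Sum>i\<in>UNIV. w $ i) = 1}"

definition region :: "real \<Rightarrow> 'n \<Rightarrow> (real ^ 'n) set" where
  "region \<epsilon> j = {w. \<forall>l. l \<noteq> j \<longrightarrow> w $ j \<ge> w $ l + \<epsilon> / sqrt 2}"

definition argmax_eps :: "real \<Rightarrow> real ^ 'n \<Rightarrow> 'n set" where
  "argmax_eps \<epsilon> w = {j. infdist w (region \<epsilon> j) < \<epsilon>}"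

definition eps_compatible :: "real \<Rightarrow> ((real ^ 'n) \<Rightarrow> 'n set) \<Rightarrow> bool" where
  "eps_compatible \<epsilon> s \<longleftrightarrow>
     (\<forall>v\<in>prob_simplex. \<forall>w\<in>prob_simplex. norm (v - w) < \<epsilon> \<longrightarrow> s v \<inter> s w \<noteq> {})"

end

theory Submission imports Defs begin

(* For a vector x choose a threshold tau at which the excess e = max 0 (x - tau) satisfies
   (sum e)^2 + |e|^2 = eps^2. Lowering every coordinate to tau and raising coordinate j to
   tau + eps/sqrt 2 lands in R_j at distance less than eps as soon as
   x_j > tau + eps/sqrt 2 - sum e, so all such j belong to argmax_eps x. If argmax_eps v and
   argmax_eps w were disjoint, the excess vectors a of v and b of w would have disjoint supports,
   with v - w large on both. Testing v - w against (sum b) a - (sum a) b and applying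
   Cauchy-Schwarz then yields |v - w| >= eps. *)

definition excess :: "real \<Rightarrow> real ^ 'n \<Rightarrow> real ^ 'n" where
  "excess \<tau> x = (\<chi> l. max 0 (x $ l - \<tau>))"

definition excess_mass :: "real \<Rightarrow> real ^ 'n \<Rightarrow> real" where
  "excess_mass \<tau> x = (\<Sum>l\<in>UNIV. excess \<tau> x $ l)"

definition is_excess_level :: "real \<Rightarrow> real ^ 'n \<Rightarrow> real \<Rightarrow> bool" where
  "is_excess_level \<epsilon> x \<tau> \<longleftrightarrow> (excess_mass \<tau> x)\<^sup>2 + (norm (excess \<tau> x))\<^sup>2 = \<epsilon>\<^sup>2"

definition level_cutoff :: "real \<Rightarrow> real \<Rightarrow> real ^ 'n \<Rightarrow> real" where
  "level_cutoff \<epsilon> \<tau> x = \<tau> + \<epsilon> / sqrt 2 - excess_mass \<tau> x"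

lemma excess_nth [simp]: "excess \<tau> x $ l = max 0 (x $ l - \<tau>)"
  by (simp add: excess_def)

lemma power2_norm_vec: "(norm (x :: real ^ 'n))\<^sup>2 = (\<Sum>l\<in>UNIV. (x $ l)\<^sup>2)"
  unfolding power2_norm_eq_inner inner_vec_def by (simp add: power2_eq_square)

lemma excess_mass_nonneg: "0 \<le> excess_mass \<tau> x"
  by (simp add: excess_mass_def sum_nonneg)

lemma norm_excess_le_mass: "norm (excess \<tau> x) \<le> excess_mass \<tau> x"
  using norm_le_l1_cart[of "excess \<tau> x"] by (simp add: excess_mass_def)

lemma excess_level_exists:
  fixes x :: "real ^ 'n"
  assumes "0 < \<epsilon>"
  shows "\<exists>\<tau>. is_excess_level \<epsilon> x \<tau>"
proof -
  define G where "G \<tau> = (\<Sum>l\<in>UNIV. max 0 (x $ l - \<tau>))\<^sup>2 + (\<Sum>l\<in>UNIV. (max 0 (x $ l - \<tau>))\<^sup>2)"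
    for \<tau>
  have G_eq: "G \<tau> = (excess_mass \<tau> x)\<^sup>2 + (norm (excess \<tau> x))\<^sup>2" for \<tau>
    by (simp add: G_def excess_mass_def power2_norm_vec)
  obtain i :: 'n where True by simp
  define a where "a = x $ i - \<epsilon>"
  define b where "b = (\<Sum>l\<in>UNIV. \<bar>x $ l\<bar>)"
  have x_le_b: "x $ l \<le> b" for l
    using member_le_sum[of l UNIV "\<lambda>l. \<bar>x $ l\<bar>"] unfolding b_def by auto
  have "G b = 0"
    using x_le_b by (simp add: G_def)
  then have "G b \<le> \<epsilon>\<^sup>2" by simp
  moreover have "\<epsilon>\<^sup>2 \<le> G a"
  proof -
    have "\<epsilon> = max 0 (x $ i - a)" using assms by (simp add: a_def)
    also have "\<dots> \<le> (\<Sum>l\<in>UNIV. max 0 (x $ l - a))" by (rule member_le_sum) auto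
    finally have "\<epsilon>\<^sup>2 \<le> (\<Sum>l\<in>UNIV. max 0 (x $ l - a))\<^sup>2"
      using assms by (simp add: power_mono)
    then show ?thesis by (simp add: G_def sum_nonneg add_increasing2)
  qed
  moreover have "a \<le> b" using x_le_b[of i] assms by (simp add: a_def)
  moreover have "continuous_on {a..b} G" unfolding G_def by (intro continuous_intros)
  ultimately obtain \<tau> where "G \<tau> = \<epsilon>\<^sup>2" using IVT2' by blast
  then show ?thesis by (auto simp: is_excess_level_def G_eq)
qed

lemma excess_level_mass_ge:
  assumes "is_excess_level \<epsilon> x \<tau>"
  shows "\<epsilon> / sqrt 2 \<le> excess_mass \<tau> x"
proof -
  let ?m = "excess_mass \<tau> x" and ?n = "norm (excess \<tau> x)"
  have "?n\<^sup>2 \<le> ?m\<^sup>2" using norm_excess_le_mass by (intro power_mono) simp_all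
  moreover have "?m\<^sup>2 + ?n\<^sup>2 = \<epsilon>\<^sup>2" using assms by (simp add: is_excess_level_def)
  ultimately have "(\<epsilon> / sqrt 2)\<^sup>2 \<le> ?m\<^sup>2" by (simp add: power_divide)
  then show ?thesis using excess_mass_nonneg by (rule power2_le_imp_le)
qed

lemma mem_argmax_eps_if_above_cutoff:
  fixes x :: "real ^ 'n"
  assumes "0 < \<epsilon>" "is_excess_level \<epsilon> x \<tau>" "level_cutoff \<epsilon> \<tau> x < x $ j"
  shows "j \<in> argmax_eps \<epsilon> x"
proof -
  define c where "c = \<epsilon> / sqrt 2"
  define d where "d = max 0 (\<tau> + c - x $ j)"
  define p :: "real ^ 'n" where "p = (\<chi> l. if l = j then max (x $ j) (\<tau> + c) else min (x $ l) \<tau>)"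
  have "p \<in> region \<epsilon> j"
    by (auto simp: region_def p_def c_def)
  have "(norm (x - p))\<^sup>2 = (\<Sum>l\<in>UNIV. (x $ l - p $ l)\<^sup>2)"
    by (simp add: power2_norm_vec)
  also have "\<dots> \<le> (\<Sum>l\<in>UNIV. (excess \<tau> x $ l)\<^sup>2 + (if l = j then d\<^sup>2 else 0))"
    by (intro sum_mono, cases "l = j")
      (auto simp: p_def d_def max_def min_def power2_eq_square algebra_simps)
  also have "\<dots> = (norm (excess \<tau> x))\<^sup>2 + d\<^sup>2"
    by (simp add: power2_norm_vec sum.distrib)
  also have "\<dots> < (norm (excess \<tau> x))\<^sup>2 + (excess_mass \<tau> x)\<^sup>2"
  proof -
    have "0 < \<epsilon> / sqrt 2" using assms(1) by simp
    then have "0 < excess_mass \<tau> x" using excess_level_mass_ge[OF assms(2)] by linarith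
    then have "d < excess_mass \<tau> x"
      using assms(3) by (simp add: d_def c_def level_cutoff_def)
    then show ?thesis by (simp add: d_def power_strict_mono)
  qed
  also have "\<dots> = \<epsilon>\<^sup>2" using assms(2) by (simp add: is_excess_level_def)
  finally have "dist x p < \<epsilon>"
    using assms(1) by (simp add: dist_norm power_less_imp_less_base)
  moreover have "infdist x (region \<epsilon> j) \<le> dist x p"
    using \<open>p \<in> region \<epsilon> j\<close> by (rule infdist_le)
  ultimately show ?thesis by (simp add: argmax_eps_def)
qed

lemma power2_norm_scaleR_diff_le:
  fixes a b :: "real ^ 'n"
  assumes "\<And>l. 0 \<le> a $ l" "\<And>l. 0 \<le> b $ l" "0 \<le> s" "0 \<le> t"
  shows "(norm (t *\<^sub>R a - s *\<^sub>R b))\<^sup>2 \<le> t\<^sup>2 * (norm a)\<^sup>2 + s\<^sup>2 * (norm b)\<^sup>2"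
proof -
  have "0 \<le> inner a b"
    using assms(1,2) by (simp add: inner_vec_def sum_nonneg)
  then have "0 \<le> 2 * (s * t) * inner a b"
    using assms(3,4) by simp
  moreover have "(norm (t *\<^sub>R a - s *\<^sub>R b))\<^sup>2
      = t\<^sup>2 * (norm a)\<^sup>2 + s\<^sup>2 * (norm b)\<^sup>2 - 2 * (s * t) * inner a b"
    unfolding power2_norm_eq_inner
    by (simp add: inner_diff_left inner_diff_right inner_commute[of b a] power2_eq_square algebra_simps)
  ultimately show ?thesis by linarith
qed

lemma excess_separated_bound:
  fixes v w \<sigma> \<tau> c s t :: real
  assumes "0 \<le> s" "c \<le> s" "0 \<le> t" "c \<le> t"
    and "v \<le> \<sigma> + c - s \<or> w \<le> \<tau> + c - t"
  shows "t * max 0 (v - \<sigma>) * (max 0 (v - \<sigma>) + (\<sigma> - \<tau> - c + t))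
           + s * max 0 (w - \<tau>) * (max 0 (w - \<tau>) + (\<tau> - \<sigma> - c + s))
         \<le> (v - w) * (t * max 0 (v - \<sigma>) - s * max 0 (w - \<tau>))"
proof (cases "\<sigma> < v")
  case True
  then have "w \<le> \<tau> + c - t" "w \<le> \<tau>" using assms by auto
  then have "0 \<le> t * (v - \<sigma>) * (\<tau> + c - t - w)" using True assms by simp
  then show ?thesis using True \<open>w \<le> \<tau>\<close> by (simp add: algebra_simps)
next
  case False
  show ?thesis
  proof (cases "\<tau> < w")
    case True
    then have "v \<le> \<sigma> + c - s" using assms by auto
    then have "0 \<le> s * (w - \<tau>) * (\<sigma> + c - s - v)" using True assms by simp
    then show ?thesis using True False by (simp add: algebra_simps)
  qed (use False in simp)
qed

lemma inner_diff_excess_ge: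
  fixes v w :: "real ^ 'n" and \<sigma> \<tau> c :: real
  defines "s \<equiv> excess_mass \<sigma> v" and "t \<equiv> excess_mass \<tau> w"
  assumes "c \<le> s" "c \<le> t"
    and "\<And>l. v $ l \<le> \<sigma> + c - s \<or> w $ l \<le> \<tau> + c - t"
  shows "t * (norm (excess \<sigma> v))\<^sup>2 + s * (norm (excess \<tau> w))\<^sup>2 + s * t * (s + t - 2 * c)
         \<le> inner (v - w) (t *\<^sub>R excess \<sigma> v - s *\<^sub>R excess \<tau> w)"
proof -
  have "0 \<le> s" "0 \<le> t"
    unfolding s_def t_def by (simp_all add: excess_mass_nonneg)
  let ?a = "\<lambda>l. excess \<sigma> v $ l" and ?b = "\<lambda>l. excess \<tau> w $ l"
  let ?K = "\<sigma> - \<tau> - c + t" and ?L = "\<tau> - \<sigma> - c + s"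
  have "t * (norm (excess \<sigma> v))\<^sup>2 + s * (norm (excess \<tau> w))\<^sup>2 + s * t * (s + t - 2 * c)
      = t * (\<Sum>l\<in>UNIV. (?a l)\<^sup>2) + (t * ?K) * (\<Sum>l\<in>UNIV. ?a l)
        + s * (\<Sum>l\<in>UNIV. (?b l)\<^sup>2) + (s * ?L) * (\<Sum>l\<in>UNIV. ?b l)"
    unfolding power2_norm_vec excess_mass_def[symmetric] s_def[symmetric] t_def[symmetric]
    by (simp add: algebra_simps)
  also have "\<dots> = (\<Sum>l\<in>UNIV. t * (?a l)\<^sup>2 + (t * ?K) * ?a l + s * (?b l)\<^sup>2 + (s * ?L) * ?b l)"
    by (simp add: sum.distrib sum_distrib_left)
  also have "\<dots> = (\<Sum>l\<in>UNIV. t * ?a l * (?a l + ?K) + s * ?b l * (?b l + ?L))"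
    by (rule sum.cong) (simp_all add: power2_eq_square algebra_simps)
  also have "\<dots> \<le> (\<Sum>l\<in>UNIV. (v $ l - w $ l) * (t * ?a l - s * ?b l))"
    unfolding excess_nth
    by (intro sum_mono excess_separated_bound \<open>0 \<le> s\<close> \<open>0 \<le> t\<close> assms(3-5))
  also have "\<dots> = inner (v - w) (t *\<^sub>R excess \<sigma> v - s *\<^sub>R excess \<tau> w)"
    by (simp add: inner_vec_def)
  finally show ?thesis .
qed

(* With N the common expression below, N = 2c (c^2 - (s - c)(t - c)) and
   N^2 - 2c^2 (t^2 A + s^2 B) = 8 c^2 s t (s - c)(t - c). *)
lemma excess_level_quadratic_bounds:
  fixes c s t A B :: real
  assumes "0 < c" "c \<le> s" "c \<le> t" "s\<^sup>2 + A = 2 * c\<^sup>2" "t\<^sup>2 + B = 2 * c\<^sup>2" "0 \<le> A" "0 \<le> B"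
  shows "0 < t * A + s * B + s * t * (s + t - 2 * c)"
    and "2 * c\<^sup>2 * (t\<^sup>2 * A + s\<^sup>2 * B) \<le> (t * A + s * B + s * t * (s + t - 2 * c))\<^sup>2"
proof -
  have A: "A = 2 * c\<^sup>2 - s\<^sup>2" and B: "B = 2 * c\<^sup>2 - t\<^sup>2" using assms(4,5) by simp_all
  have N: "t * A + s * B + s * t * (s + t - 2 * c) = 2 * c * (c\<^sup>2 - (s - c) * (t - c))"
    unfolding A B by algebra
  have "0 < c\<^sup>2" "(2 * c)\<^sup>2 = 4 * c\<^sup>2" using assms(1) by (simp_all add: power_mult_distrib)
  then have "s\<^sup>2 < (2 * c)\<^sup>2" "t\<^sup>2 < (2 * c)\<^sup>2" using assms(4-7) by linarith+
  moreover have "0 \<le> 2 * c" using assms(1) by simp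
  ultimately have "s < 2 * c" "t < 2 * c" by (blast intro: power2_less_imp_less)+
  then have "s - c < c" "t - c < c" by simp_all
  then have "(s - c) * (t - c) \<le> (s - c) * c" using assms(2) by (intro mult_left_mono) auto
  also have "\<dots> < c * c" using \<open>s - c < c\<close> assms(1) by (intro mult_strict_right_mono)
  finally have "(s - c) * (t - c) < c * c" .
  then show "0 < t * A + s * B + s * t * (s + t - 2 * c)"
    unfolding N using assms(1) by (simp add: power2_eq_square)
  have "(t * A + s * B + s * t * (s + t - 2 * c))\<^sup>2 - 2 * c\<^sup>2 * (t\<^sup>2 * A + s\<^sup>2 * B)
      = 8 * c\<^sup>2 * s * t * (s - c) * (t - c)"
    unfolding A B by algebra
  moreover have "0 \<le> 8 * c\<^sup>2 * s * t * (s - c) * (t - c)"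
    using assms(1-3) by simp
  ultimately show "2 * c\<^sup>2 * (t\<^sup>2 * A + s\<^sup>2 * B) \<le> (t * A + s * B + s * t * (s + t - 2 * c))\<^sup>2"
    by linarith
qed

lemma far_if_cutoffs_separated:
  fixes v w :: "real ^ 'n"
  assumes "0 < \<epsilon>" "is_excess_level \<epsilon> v \<sigma>" "is_excess_level \<epsilon> w \<tau>"
    and "\<And>l. v $ l \<le> level_cutoff \<epsilon> \<sigma> v \<or> w $ l \<le> level_cutoff \<epsilon> \<tau> w"
  shows "\<epsilon> \<le> norm (v - w)"
proof -
  define c where "c = \<epsilon> / sqrt 2"
  define s where "s = excess_mass \<sigma> v"
  define t where "t = excess_mass \<tau> w"
  define z where "z = t *\<^sub>R excess \<sigma> v - s *\<^sub>R excess \<tau> w"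
  define N where "N = t * (norm (excess \<sigma> v))\<^sup>2 + s * (norm (excess \<tau> w))\<^sup>2 + s * t * (s + t - 2 * c)"
  have "0 < c" and c2: "\<epsilon>\<^sup>2 = 2 * c\<^sup>2" using assms(1) by (simp_all add: c_def power_divide)
  have "c \<le> s" "c \<le> t"
    using excess_level_mass_ge assms(2,3) by (simp_all add: c_def s_def t_def)
  have "N \<le> inner (v - w) z"
    unfolding N_def z_def s_def t_def
    by (rule inner_diff_excess_ge) (use \<open>c \<le> s\<close> \<open>c \<le> t\<close> assms(4) in
        \<open>simp_all add: s_def t_def c_def level_cutoff_def\<close>)
  also have "\<dots> \<le> norm (v - w) * norm z" by (rule norm_cauchy_schwarz)
  finally have N_le: "N \<le> norm (v - w) * norm z" .
  have levels: "s\<^sup>2 + (norm (excess \<sigma> v))\<^sup>2 = 2 * c\<^sup>2" "t\<^sup>2 + (norm (excess \<tau> w))\<^sup>2 = 2 * c\<^sup>2"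
    using assms(2,3) c2 by (simp_all add: is_excess_level_def s_def t_def)
  have "0 < N"
    unfolding N_def by (rule excess_level_quadratic_bounds(1)) (use \<open>0 < c\<close> \<open>c \<le> s\<close> \<open>c \<le> t\<close> levels in auto)
  have "(\<epsilon> * norm z)\<^sup>2 \<le> 2 * c\<^sup>2 * (t\<^sup>2 * (norm (excess \<sigma> v))\<^sup>2 + s\<^sup>2 * (norm (excess \<tau> w))\<^sup>2)"
    unfolding power_mult_distrib c2 z_def using \<open>0 < c\<close> \<open>c \<le> s\<close> \<open>c \<le> t\<close>
    by (intro mult_left_mono power2_norm_scaleR_diff_le) auto
  also have "\<dots> \<le> N\<^sup>2"
    unfolding N_def by (rule excess_level_quadratic_bounds(2)) (use \<open>0 < c\<close> \<open>c \<le> s\<close> \<open>c \<le> t\<close> levels in auto)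
  finally have "\<epsilon> * norm z \<le> N"
    by (rule power2_le_imp_le) (use \<open>0 < N\<close> in simp)
  with N_le have "\<epsilon> * norm z \<le> norm (v - w) * norm z" by simp
  moreover have "0 < norm z" using N_le \<open>0 < N\<close> by (auto simp: order.strict_iff_order)
  ultimately show ?thesis by simp
qed

theorem theorem3:
  fixes \<epsilon> :: real
  assumes "\<epsilon> > 0"
  shows "(\<forall>v w :: real ^ 'n. norm (v - w) < \<epsilon> \<longrightarrow>
            argmax_eps \<epsilon> v \<inter> argmax_eps \<epsilon> w \<noteq> {})
         \<and> eps_compatible \<epsilon> (argmax_eps \<epsilon> :: real ^ 'n \<Rightarrow> 'n set)"
proof -
  have "argmax_eps \<epsilon> v \<inter> argmax_eps \<epsilon> w \<noteq> {}" if "norm (v - w) < \<epsilon>" for v w :: "real ^ 'n"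
  proof
    assume disjoint: "argmax_eps \<epsilon> v \<inter> argmax_eps \<epsilon> w = {}"
    obtain \<sigma> \<tau> where levels: "is_excess_level \<epsilon> v \<sigma>" "is_excess_level \<epsilon> w \<tau>"
      using excess_level_exists[OF assms] by blast
    have "v $ l \<le> level_cutoff \<epsilon> \<sigma> v \<or> w $ l \<le> level_cutoff \<epsilon> \<tau> w" for l
      using mem_argmax_eps_if_above_cutoff[OF assms levels(1), of l]
        mem_argmax_eps_if_above_cutoff[OF assms levels(2), of l] disjoint by fastforce
    then have "\<epsilon> \<le> norm (v - w)" by (rule far_if_cutoffs_separated[OF assms levels])
    with that show False by simp
  qed
  then show ?thesis unfolding eps_compatible_def by blast
qed

end
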